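(* Let $K$ be a compact subset of $\mathbb R^d$, let $\mu\in\mathcal P(K)$ and let $q\in\mathbb R$. Then for any $\tau\in(\underline D_\mu(q),\overline D_\mu(q))$ there exists a sequence $(r_n)$ of positive numbers tending to $0$ such that $\frac{\log I_\mu(r_n,q)}{(q-1)\log r_n}\to\tau$ when $q\ne1$, and $\frac{I_\mu(r_n,1)}{\log r_n}\to\tau$ when $q=1$.
   Context: $\mathcal P(K)$ is the set of Borel probability measures on $K$; $B(x,r)$ is the open ball. For $q\ne1$: $I_\mu(r,q)=\int_K\mu(B(x,r))^{q-1}d\mu(x)$, $\underline D_\mu(q)=\liminf_{r\to0}\frac{\log I_\mu(r,q)}{(q-1)\log r}$, $\overline D_\mu(q)$ the $\limsup$. For $q=1$: $I_\mu(r,1)=\int_K\log\mu(B(x,r))d\mu(x)$, $\underline D_\mu(1)=\liminf_{r\to0}\frac{I_\mu(r,1)}{\log r}$, $\overline D_\mu(1)$ the $\limsup$. *)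

theory Defs
  imports "HOL-Probability.Probability"
begin

definition ball_mass :: "'a::metric_space measure \<Rightarrow> 'a \<Rightarrow> real \<Rightarrow> real" where
  "ball_mass M x r = measure M (ball x r \<inter> space M)"

definition I_mu :: "'a::metric_space measure \<Rightarrow> real \<Rightarrow> real \<Rightarrow> real" where
  "I_mu M r q = (if q = 1 then (\<integral>x. ln (ball_mass M x r) \<partial>M)
                 else (\<integral>x. (ball_mass M x r) powr (q - 1) \<partial>M))"

definition dim_quot :: "'a::metric_space measure \<Rightarrow> real \<Rightarrow> real \<Rightarrow> real" where
  "dim_quot M q r = (if q = 1 then I_mu M r 1 / ln r
                     else ln (I_mu M r q) / ((q - 1) * ln r))"

definition lower_D :: "'a::metric_space measure \<Rightarrow> real \<Rightarrow> ereal" where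
  "lower_D M q = Liminf (at_right 0) (\<lambda>r. ereal (dim_quot M q r))"

definition upper_D :: "'a::metric_space measure \<Rightarrow> real \<Rightarrow> ereal" where
  "upper_D M q = Limsup (at_right 0) (\<lambda>r. ereal (dim_quot M q r))"

end

theory Submission
  imports Defs
begin

text \<open>
  Write the quotient as G(r) / log r, with G(r) = log I(r,q) / (q - 1), resp. G(r) = I(r,1).
  Since K is compact, a.e. ball mass at a fixed radius is bounded below by a positive constant,
  so all integrals are finite and positive; as ball masses grow with r, so does G (the sign of
  q - 1 compensates the direction of t \<mapsto> t^(q-1)). Hence \<phi>(r) = G(r) - \<tau> log r can only
  jump upwards, and along a grid that is fine enough in log r it never drops by more than \<epsilon>
  from one point to the next. Near 0 we find a < b with
  G(a)/log a < \<tau> < G(b)/log b, i.e. \<phi>(a) > 0 > \<phi>(b), so \<phi> passes within \<epsilon> of 0 somewhere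
  in [a,b]; where log r \<le> -1 this puts the quotient within \<epsilon> of \<tau>.
\<close>

lemma space_eq_of_sets_restrict_space:
  assumes "sets M = sets (restrict_space borel K)"
  shows "space M = K"
  using sets_eq_imp_space_eq[OF assms] by (simp add: space_restrict_space)

lemma open_Int_space_in_sets:
  assumes "sets M = sets (restrict_space borel K)" "open U"
  shows "U \<inter> space M \<in> sets M"
  using assms space_eq_of_sets_restrict_space[OF assms(1)]
  by (auto simp: sets_restrict_space Int_commute)

lemma ident_measurable_restrict_borel:
  assumes "sets M = sets (restrict_space borel K)"
  shows "(\<lambda>x. x) \<in> M \<rightarrow>\<^sub>M borel"
  using measurable_cong_sets[OF assms refl] measurable_restrict_space1 measurable_ident_sets
  by metis

lemma ball_mass_measurable:
  fixes M :: "'a::{metric_space,second_countable_topology} measure"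
  assumes "prob_space M" "sets M = sets (restrict_space borel K)"
  shows "(\<lambda>x. ball_mass M x r) \<in> borel_measurable M"
proof -
  interpret prob_space M by fact
  define D where "D = {p \<in> space (M \<Otimes>\<^sub>M M). dist (fst p) (snd p) < r}"
  have "D \<in> sets (M \<Otimes>\<^sub>M M)"
    using ident_measurable_restrict_borel[OF assms(2)] unfolding D_def by measurable
  then have "(\<lambda>x. enn2real (emeasure M (Pair x -` D))) \<in> borel_measurable M"
    by (intro borel_measurable_enn2real measurable_emeasure_Pair)
  moreover have "enn2real (emeasure M (Pair x -` D)) = ball_mass M x r" if "x \<in> space M" for x
  proof -
    have "Pair x -` D = ball x r \<inter> space M"
      using that by (auto simp: D_def space_pair_measure dist_commute)
    then show ?thesis by (simp add: ball_mass_def measure_def)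
  qed
  ultimately show ?thesis
    by (rule measurable_cong[THEN iffD1, rotated]) simp
qed

lemma ball_mass_nonneg: "0 \<le> ball_mass M x r"
  by (simp add: ball_mass_def)

lemma ball_mass_le_1: "prob_space M \<Longrightarrow> ball_mass M x r \<le> 1"
  by (simp add: ball_mass_def prob_space.prob_le_1)

lemma ball_mass_mono:
  assumes "prob_space M" "sets M = sets (restrict_space borel K)" "r \<le> t"
  shows "ball_mass M x r \<le> ball_mass M x t"
proof -
  interpret prob_space M by fact
  show ?thesis unfolding ball_mass_def
    using open_Int_space_in_sets[OF assms(2), of "ball x t"] assms(3)
    by (intro finite_measure_mono) auto
qed

lemma AE_ball_mass_bounded_below:
  assumes "compact K" "prob_space M" "sets M = sets (restrict_space borel K)" "0 < r"
  obtains c where "0 < c" "AE x in M. c \<le> ball_mass M x r"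
proof -
  interpret prob_space M by fact
  have space: "space M = K" by (rule space_eq_of_sets_restrict_space[OF assms(3)])
  have "K \<subseteq> (\<Union>y\<in>K. ball y (r/2))" using assms(4) by auto
  then obtain Y where Y: "Y \<subseteq> K" "finite Y" "K \<subseteq> (\<Union>y\<in>Y. ball y (r/2))"
    by (rule compactE_image[OF assms(1) open_ball])
  define m where "m y = ball_mass M y (r/2)" for y
  define c where "c = Min (insert 1 (m ` {y\<in>Y. 0 < m y}))"
  have "c \<in> insert 1 (m ` {y\<in>Y. 0 < m y})"
    unfolding c_def using Y(2) by (intro Min_in) auto
  then have "0 < c" by auto
  \<comment> \<open>Points covered only by null balls form a null set; any other x lies in
      some B(y,r/2) \<subseteq> B(x,r) of mass at least c.\<close>
  define Z where "Z = (\<Union>y\<in>{y\<in>Y. m y = 0}. ball y (r/2) \<inter> space M)"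
  have "Z \<in> null_sets M"
    unfolding Z_def
  proof (intro null_sets_UN' countable_finite)
    fix y assume "y \<in> {y \<in> Y. m y = 0}"
    then show "ball y (r/2) \<inter> space M \<in> null_sets M"
      using open_Int_space_in_sets[OF assms(3), of "ball y (r/2)"]
      by (simp add: m_def ball_mass_def emeasure_eq_measure null_sets_def)
  qed (use Y(2) in simp)
  moreover have "c \<le> ball_mass M x r" if x: "x \<in> space M - Z" for x
  proof -
    obtain y where y: "y \<in> Y" "x \<in> ball y (r/2)"
      using x Y(3) space by auto
    with x have "m y \<noteq> 0" unfolding Z_def by auto
    then have "0 < m y" using ball_mass_nonneg[of M y "r/2"] unfolding m_def by linarith
    have "ball y (r/2) \<subseteq> ball x r"
    proof
      fix z assume "z \<in> ball y (r/2)"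
      with y(2) show "z \<in> ball x r"
        using dist_triangle[of x z y] by (simp add: dist_commute)
    qed
    then have "m y \<le> ball_mass M x r" unfolding m_def ball_mass_def
      using open_Int_space_in_sets[OF assms(3), of "ball x r"]
      by (intro finite_measure_mono) auto
    moreover have "c \<le> m y" unfolding c_def using y(1) \<open>0 < m y\<close> Y(2) by (intro Min_le) auto
    ultimately show ?thesis by linarith
  qed
  ultimately have "AE x in M. c \<le> ball_mass M x r"
    by (auto intro: AE_I')
  with \<open>0 < c\<close> show thesis by (rule that)
qed

lemma integrable_comp_ball_mass:
  fixes M :: "'a::{metric_space,second_countable_topology} measure" and g :: "real \<Rightarrow> real"
  assumes "prob_space M" "sets M = sets (restrict_space borel K)"
    and "g \<in> borel_measurable borel" "continuous_on {c..1} g"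
    and "AE x in M. c \<le> ball_mass M x r"
  shows "integrable M (\<lambda>x. g (ball_mass M x r))"
proof -
  interpret prob_space M by fact
  obtain B where B: "\<forall>m\<in>{c..1}. norm (g m) \<le> B"
    using compact_imp_bounded[OF compact_continuous_image[OF assms(4) compact_Icc]]
    by (auto simp: bounded_iff)
  have "AE x in M. norm (g (ball_mass M x r)) \<le> B"
    using assms(5) by eventually_elim (use B ball_mass_le_1[OF assms(1)] in auto)
  then show ?thesis
    using measurable_compose[OF ball_mass_measurable[OF assms(1,2)] assms(3)]
    by (intro integrable_const_bound) auto
qed

lemma integral_comp_ball_mass_mono:
  fixes M :: "'a::{metric_space,second_countable_topology} measure" and g :: "real \<Rightarrow> real"
  assumes "compact K" "prob_space M" "sets M = sets (restrict_space borel K)"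
    and "g \<in> borel_measurable borel" "continuous_on {0<..1} g" "mono_on {0<..1} g"
    and "0 < r" "r \<le> t"
  shows "(\<integral>x. g (ball_mass M x r) \<partial>M) \<le> (\<integral>x. g (ball_mass M x t) \<partial>M)"
proof -
  obtain c where c: "0 < c" "AE x in M. c \<le> ball_mass M x r"
    using AE_ball_mass_bounded_below[OF assms(1-3,7)] .
  have c_t: "AE x in M. c \<le> ball_mass M x t"
    using c(2) by eventually_elim (meson ball_mass_mono[OF assms(2,3,8)] order_trans)
  have g_cont: "continuous_on {c..1} g"
    by (rule continuous_on_subset[OF assms(5)]) (use c(1) in auto)
  show ?thesis
  proof (rule integral_mono_AE)
    show "integrable M (\<lambda>x. g (ball_mass M x r))" "integrable M (\<lambda>x. g (ball_mass M x t))"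
      using integrable_comp_ball_mass[OF assms(2-4) g_cont] c(2) c_t by auto
    show "AE x in M. g (ball_mass M x r) \<le> g (ball_mass M x t)"
      using c(2) c_t
    proof eventually_elim
      case (elim x)
      then show ?case
        using c(1) ball_mass_mono[OF assms(2,3,8)] ball_mass_le_1[OF assms(2)]
        by (intro mono_onD[OF assms(6)]) auto
    qed
  qed
qed

lemma I_mu_pos:
  fixes M :: "'a::{metric_space,second_countable_topology} measure"
  assumes "compact K" "prob_space M" "sets M = sets (restrict_space borel K)"
    and "q \<noteq> 1" "0 < r"
  shows "0 < I_mu M r q"
proof -
  interpret prob_space M by fact
  obtain c where c: "0 < c" "AE x in M. c \<le> ball_mass M x r"
    using AE_ball_mass_bounded_below[OF assms(1-3,5)] .
  define b where "b = min (c powr (q - 1)) 1"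
  have "AE x in M. b \<le> ball_mass M x r powr (q - 1)"
    using c(2)
  proof eventually_elim
    case (elim x)
    consider "1 < q" | "q < 1" using assms(4) by linarith
    then show ?case
    proof cases
      case 1
      then have "c powr (q - 1) \<le> ball_mass M x r powr (q - 1)"
        using elim c(1) by (intro powr_mono2) auto
      then show ?thesis by (simp add: b_def)
    next
      case 2
      then have "1 powr (q - 1) \<le> ball_mass M x r powr (q - 1)"
        using elim c(1) ball_mass_le_1[OF assms(2)] by (intro powr_mono2') auto
      then show ?thesis by (simp add: b_def)
    qed
  qed
  moreover have "integrable M (\<lambda>x. ball_mass M x r powr (q - 1))"
    using c by (intro integrable_comp_ball_mass[OF assms(2,3)]) (auto intro!: continuous_intros)
  ultimately have "b \<le> I_mu M r q"
    unfolding I_mu_def using assms(4) by (simp add: integral_ge_const)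
  moreover have "0 < b" unfolding b_def using c(1) by simp
  ultimately show ?thesis by linarith
qed

definition log_I_mu :: "'a::metric_space measure \<Rightarrow> real \<Rightarrow> real \<Rightarrow> real" where
  "log_I_mu M q r = (if q = 1 then I_mu M r 1 else ln (I_mu M r q) / (q - 1))"

lemma dim_quot_eq_log_I_mu: "dim_quot M q r = log_I_mu M q r / ln r"
  unfolding dim_quot_def log_I_mu_def by simp

lemma log_I_mu_mono:
  fixes M :: "'a::{metric_space,second_countable_topology} measure"
  assumes "compact K" "prob_space M" "sets M = sets (restrict_space borel K)"
    and "0 < r" "r \<le> t"
  shows "log_I_mu M q r \<le> log_I_mu M q t"
proof -
  have integral_mono: "(\<integral>x. g (ball_mass M x r) \<partial>M) \<le> (\<integral>x. g (ball_mass M x t) \<partial>M)"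
    if "g \<in> borel_measurable borel" "continuous_on {0<..1} g" "mono_on {0<..1} g"
    for g :: "real \<Rightarrow> real"
    using integral_comp_ball_mass_mono[OF assms(1-3) that assms(4,5)] .
  have powr_mono: "mono_on {0<..1} (\<lambda>m::real. m powr p)" if "0 \<le> p" for p
    using that by (auto intro!: mono_onI powr_mono2)
  consider "q = 1" | "1 < q" | "q < 1" by linarith
  then show ?thesis
  proof cases
    case 1
    have "mono_on {0<..1} (ln :: real \<Rightarrow> real)" by (auto intro!: mono_onI)
    then show ?thesis
      using 1 by (auto simp: log_I_mu_def I_mu_def intro!: integral_mono continuous_intros)
  next
    case 2
    then have "I_mu M r q \<le> I_mu M t q"
      unfolding I_mu_def by (auto intro!: integral_mono powr_mono continuous_intros)
    then show ?thesis
      using 2 I_mu_pos[OF assms(1-3), of q r] assms(4)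
      by (simp add: log_I_mu_def divide_right_mono)
  next
    case 3
    have "mono_on {0<..1} (\<lambda>m. - (m powr (q - 1)))"
      using 3 by (auto intro!: mono_onI powr_mono2')
    moreover have "continuous_on {0<..1} (\<lambda>m. - (m powr (q - 1)))"
      by (intro continuous_intros) auto
    ultimately have "I_mu M t q \<le> I_mu M r q"
      using 3 integral_mono[of "\<lambda>m. - (m powr (q - 1))"] by (simp add: I_mu_def)
    then show ?thesis
      using 3 I_mu_pos[OF assms(1-3), of q t] assms(4,5)
      by (simp add: log_I_mu_def divide_right_mono_neg)
  qed
qed

lemma frequently_less_Limsup:
  fixes f :: "'a \<Rightarrow> 'b::complete_linorder"
  assumes "c < Limsup F f"
  shows "\<exists>\<^sub>F x in F. c < f x"
proof (rule ccontr)
  assume "\<not> (\<exists>\<^sub>F x in F. c < f x)"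
  then have "Limsup F f \<le> c"
    by (intro Limsup_bounded) (simp add: not_frequently not_less)
  with assms show False by simp
qed

lemma frequently_Liminf_less:
  fixes f :: "'a \<Rightarrow> 'b::complete_linorder"
  assumes "Liminf F f < c"
  shows "\<exists>\<^sub>F x in F. f x < c"
proof (rule ccontr)
  assume "\<not> (\<exists>\<^sub>F x in F. f x < c)"
  then have "c \<le> Liminf F f"
    by (intro Liminf_bounded) (simp add: not_frequently not_less)
  with assms show False by simp
qed

lemma minus_log_drop_le:
  fixes G :: "real \<Rightarrow> real"
  assumes "G r \<le> G t" "0 < r" "r \<le> t"
  shows "G r - \<tau> * ln r - \<bar>\<tau>\<bar> * (ln t - ln r) \<le> G t - \<tau> * ln t"
proof -
  have "\<tau> * (ln t - ln r) \<le> \<bar>\<tau>\<bar> * (ln t - ln r)"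
    using assms(2,3) by (intro mult_right_mono) auto
  then show ?thesis using assms(1) by (simp add: algebra_simps)
qed

lemma monotone_minus_log_crossing:
  fixes G :: "real \<Rightarrow> real"
  assumes mono: "\<And>r t. 0 < r \<Longrightarrow> r \<le> t \<Longrightarrow> G r \<le> G t"
    and "0 < a" "a \<le> b" and pos: "0 < G a - \<tau> * ln a" and neg: "G b - \<tau> * ln b < 0"
    and "0 < \<epsilon>"
  shows "\<exists>r\<in>{a..b}. \<bar>G r - \<tau> * ln r\<bar> \<le> \<epsilon>"
proof (rule ccontr)
  assume no_crossing: "\<not> (\<exists>r\<in>{a..b}. \<bar>G r - \<tau> * ln r\<bar> \<le> \<epsilon>)"
  define \<phi> where "\<phi> r = G r - \<tau> * ln r" for r
  have far: "\<epsilon> < \<bar>\<phi> r\<bar>" if "r \<in> {a..b}" for r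
    using no_crossing that unfolding \<phi>_def by (meson not_le)
  have gap: "0 \<le> ln b - ln a" using assms(2,3) by simp
  obtain N :: nat where N: "\<bar>\<tau>\<bar> * (ln b - ln a) / \<epsilon> < N"
    using reals_Archimedean2 by blast
  have "0 < real N"
    using N gap \<open>0 < \<epsilon>\<close> by (smt (verit) divide_nonneg_pos mult_nonneg_nonneg abs_ge_zero)
  define d where "d = (ln b - ln a) / N"
  define x where "x k = exp (ln a + k * d)" for k :: nat
  have step: "\<bar>\<tau>\<bar> * d < \<epsilon>"
    using N \<open>0 < real N\<close> \<open>0 < \<epsilon>\<close> by (simp add: d_def field_simps)
  have ln_x: "ln (x k) = ln a + k * d" for k by (simp add: x_def)
  have x_pos: "0 < x k" for k by (simp add: x_def)
  have "0 \<le> d" using gap by (simp add: d_def)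
  have x_mono: "x k \<le> x (Suc k)" for k
    using \<open>0 \<le> d\<close> by (simp add: x_def algebra_simps)
  have x_in: "x k \<in> {a..b}" if "k \<le> N" for k
  proof -
    have "0 \<le> k * d" "k * d \<le> N * d"
      using that \<open>0 \<le> d\<close> by (auto intro: mult_right_mono)
    moreover have "N * d = ln b - ln a" using \<open>0 < real N\<close> by (simp add: d_def)
    ultimately have "ln a \<le> ln (x k)" "ln (x k) \<le> ln b" by (simp_all add: ln_x)
    then show ?thesis using assms(2,3) x_pos[of k] by simp
  qed
  have above: "\<epsilon> < \<phi> (x k)" if "k \<le> N" for k
    using that
  proof (induction k)
    case 0
    have "x 0 = a" using assms(2) by (simp add: x_def)
    then show ?case using pos far[of a] assms(3) by (simp add: \<phi>_def abs_of_pos)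
  next
    case (Suc k)
    \<comment> \<open>G only jumps upwards, so \<phi> drops by at most \<bar>\<tau>\<bar> d between grid points.\<close>
    have "\<phi> (x k) - \<bar>\<tau>\<bar> * d \<le> \<phi> (x (Suc k))"
      using minus_log_drop_le[OF mono[OF x_pos x_mono] x_pos x_mono, of k \<tau>]
      by (simp add: \<phi>_def ln_x algebra_simps)
    then have "0 < \<phi> (x (Suc k))" using Suc step by simp
    then show ?case using far[OF x_in[OF Suc.prems]] by simp
  qed
  moreover have "x N = b"
    using \<open>0 < real N\<close> assms(2,3) by (simp add: x_def d_def)
  ultimately show False using above[of N] neg \<open>0 < \<epsilon>\<close> by (simp add: \<phi>_def)
qed

lemma frequently_at_rightE:
  fixes a b :: real
  assumes "\<exists>\<^sub>F r in at_right a. P r" "a < b"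
  obtains r where "a < r" "r < b" "P r"
proof -
  have "eventually (\<lambda>r. a < r \<and> r < b) (at_right a)"
    by (rule eventually_at_rightI) (use assms(2) in auto)
  from frequently_ex[OF frequently_eventually_frequently[OF assms(1) this]]
  show thesis using that by blast
qed

lemma monotone_log_quotient_approx:
  fixes G :: "real \<Rightarrow> real"
  assumes mono: "\<And>r t. 0 < r \<Longrightarrow> r \<le> t \<Longrightarrow> G r \<le> G t"
    and lower: "Liminf (at_right 0) (\<lambda>r. ereal (G r / ln r)) < ereal \<tau>"
    and upper: "ereal \<tau> < Limsup (at_right 0) (\<lambda>r. ereal (G r / ln r))"
    and "0 < \<delta>" "0 < \<epsilon>"
  shows "\<exists>r. 0 < r \<and> r < \<delta> \<and> \<bar>G r / ln r - \<tau>\<bar> \<le> \<epsilon>"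
proof -
  \<comment> \<open>Below exp(-1) we have \<bar>ln r\<bar> \<ge> 1, so a bound on G r - \<tau> ln r
      carries over to the quotient.\<close>
  define \<delta>' where "\<delta>' = min \<delta> (exp (- 1))"
  have ln_small: "ln r < - 1" if "0 < r" "r < \<delta>'" for r
  proof -
    have "r < exp (- 1)" using that by (simp add: \<delta>'_def)
    then show ?thesis using that(1) by (metis exp_gt_zero ln_exp ln_less_cancel_iff)
  qed
  have "0 < \<delta>'" using \<open>0 < \<delta>\<close> by (simp add: \<delta>'_def)
  obtain b where b: "0 < b" "b < \<delta>'" "\<tau> < G b / ln b"
    using frequently_less_Limsup[OF upper] \<open>0 < \<delta>'\<close> by (auto elim: frequently_at_rightE)
  obtain a where a: "0 < a" "a < b" "G a / ln a < \<tau>"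
    using frequently_Liminf_less[OF lower] \<open>0 < b\<close>
    by (auto elim: frequently_at_rightE)
  have "ln a < 0" using ln_small[OF a(1) less_trans[OF a(2) b(2)]] by (rule less_trans) simp
  have "ln b < 0" using ln_small[OF b(1,2)] by (rule less_trans) simp
  have pos: "0 < G a - \<tau> * ln a"
    using a(3) unfolding neg_divide_less_eq[OF \<open>ln a < 0\<close>] by simp
  have neg: "G b - \<tau> * ln b < 0"
    using b(3) unfolding neg_less_divide_eq[OF \<open>ln b < 0\<close>] by simp
  obtain r where r: "a \<le> r" "r \<le> b" "\<bar>G r - \<tau> * ln r\<bar> \<le> \<epsilon>"
    using monotone_minus_log_crossing[OF mono a(1) less_imp_le[OF a(2)] pos neg \<open>0 < \<epsilon>\<close>]
    by auto
  have "0 < r" "r < \<delta>'" using r(1,2) a(1) b(2) by linarith+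
  then have ln_r: "ln r < - 1" by (rule ln_small)
  have "G r / ln r - \<tau> = (G r - \<tau> * ln r) / ln r"
    using ln_r by (simp add: diff_divide_distrib)
  then have "\<bar>G r / ln r - \<tau>\<bar> = \<bar>G r - \<tau> * ln r\<bar> / \<bar>ln r\<bar>"
    by (simp add: abs_divide)
  also have "\<dots> \<le> \<bar>G r - \<tau> * ln r\<bar>"
  proof (rule mult_imp_div_pos_le)
    show "0 < \<bar>ln r\<bar>" using ln_r by simp
    have "1 \<le> \<bar>ln r\<bar>" using ln_r by simp
    then show "\<bar>G r - \<tau> * ln r\<bar> \<le> \<bar>G r - \<tau> * ln r\<bar> * \<bar>ln r\<bar>"
      using mult_left_mono[of 1 "\<bar>ln r\<bar>" "\<bar>G r - \<tau> * ln r\<bar>"] by simp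
  qed
  finally show ?thesis
    using r(3) \<open>0 < r\<close> \<open>r < \<delta>'\<close> by (auto simp: \<delta>'_def)
qed

lemma sequence_at_right_tendsto:
  fixes f :: "real \<Rightarrow> real"
  assumes "\<And>\<delta> \<epsilon>. 0 < \<delta> \<Longrightarrow> 0 < \<epsilon> \<Longrightarrow> \<exists>r. 0 < r \<and> r < \<delta> \<and> \<bar>f r - \<tau>\<bar> \<le> \<epsilon>"
  shows "\<exists>r :: nat \<Rightarrow> real. (\<forall>n. 0 < r n) \<and> r \<longlonglongrightarrow> 0 \<and> (\<lambda>n. f (r n)) \<longlonglongrightarrow> \<tau>"
proof -
  have "\<exists>r. 0 < r \<and> r < inverse (Suc n) \<and> \<bar>f r - \<tau>\<bar> \<le> inverse (Suc n)" for n
    using assms by simp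
  then obtain r where r: "\<And>n. 0 < r n \<and> r n < inverse (Suc n) \<and> \<bar>f (r n) - \<tau>\<bar> \<le> inverse (Suc n)"
    by metis
  have "norm (r n) \<le> inverse (Suc n)" "norm (f (r n) - \<tau>) \<le> inverse (Suc n)" for n
    using r[of n] by auto
  then have "r \<longlonglongrightarrow> 0" "(\<lambda>n. f (r n) - \<tau>) \<longlonglongrightarrow> 0"
    by (intro Lim_null_comparison[OF _ LIMSEQ_inverse_real_of_nat] always_eventually allI; simp)+
  then show ?thesis
    using r by (auto simp: LIM_zero_iff)
qed

theorem proposition7p3:
  fixes K :: "'a::euclidean_space set" and M :: "'a measure" and q \<tau> :: real
  assumes "compact K"
    and "prob_space M"
    and "sets M = sets (restrict_space borel K)"
    and "lower_D M q < ereal \<tau>" and "ereal \<tau> < upper_D M q"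
  shows "\<exists>r :: nat \<Rightarrow> real. (\<forall>n. 0 < r n) \<and> r \<longlonglongrightarrow> 0 \<and>
           (\<lambda>n. dim_quot M q (r n)) \<longlonglongrightarrow> \<tau>"
proof -
  have lower: "Liminf (at_right 0) (\<lambda>r. ereal (log_I_mu M q r / ln r)) < ereal \<tau>"
    using assms(4) by (simp add: lower_D_def dim_quot_eq_log_I_mu)
  have upper: "ereal \<tau> < Limsup (at_right 0) (\<lambda>r. ereal (log_I_mu M q r / ln r))"
    using assms(5) by (simp add: upper_D_def dim_quot_eq_log_I_mu)
  have "\<exists>r. 0 < r \<and> r < \<delta> \<and> \<bar>log_I_mu M q r / ln r - \<tau>\<bar> \<le> \<epsilon>"
    if "0 < \<delta>" "0 < \<epsilon>" for \<delta> \<epsilon>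
    using monotone_log_quotient_approx[OF log_I_mu_mono[OF assms(1-3)] lower upper that] .
  then show ?thesis
    unfolding dim_quot_eq_log_I_mu by (rule sequence_at_right_tendsto)
qed

end
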